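(* $\mathcal{OBLOT}^{F}_{\mathcal{F.V.}} > \mathcal{OBLOT}^{F}_{\mathcal{L.V.}}$, i.e. the model $\mathcal{OBLOT}$ under the fully synchronous scheduler with full visibility is computationally more powerful than the model $\mathcal{OBLOT}$ under the fully synchronous scheduler with limited visibility.
   Context: Robots are anonymous, identical, autonomous computational entities viewed as points moving in the Euclidean plane. Each has its own local coordinate system, with no agreement between robots and no common chirality, and perceives itself at its origin. Robots operate in Look-Compute-Move cycles. In Look a robot takes an instantaneous snapshot of the positions (and visible lights, if any) of the robots it can see. In Compute it runs the common algorithm on the snapshot to obtain a destination. In Move it moves there. Models: - $\mathcal{OBLOT}$: robots are oblivious (no memory of previous cycles) and silent (no means of communication). - $\mathcal{LUMI}$: each robot carries a persistent light whose color is taken from a finite set and is set at the end of Compute; the light is visible to the robot itself and to the other robots. - $\mathcal{FSTA}$: the light is internal, visible only to its owner. It acts as a finite persistent state; there is no communication. - $\mathcal{FCOM}$: the light is visible only to the other robots. A robot does not see its own light and is otherwise oblivious. Schedulers: time is divided into rounds. Under the semi-synchronous scheduler $S$ (SSYNCH), in each round an adversarially chosen set of robots is activated and they perform one full cycle in perfect synchronization; every robot is activated infinitely often. Under the fully synchronous scheduler $F$ (FSYNCH), every robot is activated in every round. Visibility: - Full visibility $\mathcal{F.V.}$: every robot sees all robots. - Limited visibility $\mathcal{L.V.}$: a robot sees only the robots within a fixed distance $V_r$ of its current position, with $V_r$ the same for all robots. The visibility graph (robots adjacent iff they see each other) of the initial configuration is assumed connected. Relations: $\mathcal{M}^X_V$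 denotes model $\mathcal{M}$ under scheduler $X$ with visibility $V$. For a team $R$ of robots, $Task(\mathcal{M},X,V;R)$ is the set of problems (tasks where robots must form some configuration(s) subject to conditions) solvable by $R$ in that setting. $\mathcal{R}$ is the set of all teams, and $\mathcal{R}_n$ the set of teams of size $n$. - $\mathcal{M}^{X_1}_{V_1} \ge \mathcal{N}^{X_2}_{V_2}$ if for all $R\in\mathcal{R}$, $Task(\mathcal{M},X_1,V_1;R)\supseteq Task(\mathcal{N},X_2,V_2;R)$. - $>$ means $\ge$ holds and there exists $R\in\mathcal{R}$ with $Task(\mathcal{M},X_1,V_1;R)\setminus Task(\mathcal{N},X_2,V_2;R)\neq\emptyset$. - $\perp$ (incomparable) means there exist $R_1,R_2\in\mathcal{R}$ with $Task(\mathcal{M},X_1,V_1;R_1)\setminus Task(\mathcal{N},X_2,V_2;R_1)\neq\emptyset$ and $Task(\mathcal{N},X_2,V_2;R_2)\setminus Task(\mathcal{M},X_1,V_1;R_2)\neq\emptyset$. *)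

theory Defs
  imports "HOL-Analysis.Analysis"
begin

text \<open>Robots in the Euclidean plane (modelled as complex numbers), model OBLOT,
  fully synchronous scheduler F.\<close>

datatype visibility = FullVis | LimitedVis

type_synonym config = "complex list"
type_synonym execution = "nat \<Rightarrow> config"
type_synonym problem = "execution \<Rightarrow> bool"
type_synonym algorithm = "complex set \<Rightarrow> complex"

text \<open>A team: number of robots n and common visibility range Vr.\<close>
type_synonym team = "nat \<times> real"

definition teams :: "team set" where
  "teams = {(n, Vr). 1 \<le> n \<and> 0 < Vr}"

text \<open>Local coordinate system orientation: rotation or reflection (no common
  chirality); the origin is the robot's own position.\<close>
definition local_frame :: "(complex \<Rightarrow> complex) \<Rightarrow> bool" where
  "local_frame f \<longleftrightarrow> (\<exists>u. cmod u = 1 \<and> (f = (\<lambda>z. u * z) \<or> f = (\<lambda>z. u * cnj z)))"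

definition sees :: "visibility \<Rightarrow> real \<Rightarrow> complex \<Rightarrow> complex \<Rightarrow> bool" where
  "sees vis Vr p q \<longleftrightarrow> (vis = FullVis \<or> dist p q \<le> Vr)"

definition snapshot ::
  "visibility \<Rightarrow> real \<Rightarrow> (complex \<Rightarrow> complex) \<Rightarrow> config \<Rightarrow> complex \<Rightarrow> complex set" where
  "snapshot vis Vr f c p = (\<lambda>q. f (q - p)) ` {q \<in> set c. sees vis Vr p q}"

definition fsync_step ::
  "visibility \<Rightarrow> real \<Rightarrow> algorithm \<Rightarrow> (nat \<Rightarrow> complex \<Rightarrow> complex) \<Rightarrow> config \<Rightarrow> config" where
  "fsync_step vis Vr A fr c =
     map (\<lambda>i. c ! i + inv (fr i) (A (snapshot vis Vr (fr i) c (c ! i)))) [0..<length c]"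

primrec fsync_exec ::
  "visibility \<Rightarrow> real \<Rightarrow> algorithm \<Rightarrow> (nat \<Rightarrow> complex \<Rightarrow> complex) \<Rightarrow> config \<Rightarrow> execution" where
  "fsync_exec vis Vr A fr c0 0 = c0"
| "fsync_exec vis Vr A fr c0 (Suc t) = fsync_step vis Vr A fr (fsync_exec vis Vr A fr c0 t)"

definition vis_connected :: "real \<Rightarrow> config \<Rightarrow> bool" where
  "vis_connected Vr c \<longleftrightarrow>
     (\<forall>i<length c. \<forall>j<length c.
        (i, j) \<in> {(a, b). a < length c \<and> b < length c \<and> dist (c ! a) (c ! b) \<le> Vr}\<^sup>*)"

definition Task_OBLOT_F :: "visibility \<Rightarrow> team \<Rightarrow> problem set" where
  "Task_OBLOT_F vis R = (case R of (n, Vr) \<Rightarrow>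
     {P. \<exists>A :: algorithm. \<forall>c0 fr.
           length c0 = n \<and> vis_connected Vr c0 \<and> (\<forall>i<n. local_frame (fr i))
           \<longrightarrow> P (fsync_exec vis Vr A fr c0)})"

definition model_ge :: "(team \<Rightarrow> problem set) \<Rightarrow> (team \<Rightarrow> problem set) \<Rightarrow> bool" where
  "model_ge M N \<longleftrightarrow> (\<forall>R\<in>teams. N R \<subseteq> M R)"

definition model_gt :: "(team \<Rightarrow> problem set) \<Rightarrow> (team \<Rightarrow> problem set) \<Rightarrow> bool" where
  "model_gt M N \<longleftrightarrow> model_ge M N \<and> (\<exists>R\<in>teams. M R - N R \<noteq> {})"

end

theory Submission
  imports Defs
begin

text \<open>Full visibility is at least as strong: a robot with full visibility can discard the
  points of its snapshot farther than \<open>Vr\<close> and so simulate any limited-visibility algorithm,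
  because local frames are isometries fixing the robot's own position.
  It is strictly stronger: with \<open>Vr = 1\<close>, robot 0 sees the same snapshot \<open>{0, 1}\<close> in the
  configurations \<open>[0, 1, 2]\<close> and \<open>[0, 1, 1]\<close> under limited visibility, so it cannot stay put
  exactly when the team occupies three distinct points; with full visibility it simply counts
  the points it sees.\<close>

lemma local_frame_id: "local_frame (\<lambda>z. z)"
  unfolding local_frame_def by (auto intro!: exI[where x = 1])

lemma local_frame_norm: "local_frame f \<Longrightarrow> cmod (f z) = cmod z"
  unfolding local_frame_def by (auto simp: norm_mult)

lemma local_frame_zero: "local_frame f \<Longrightarrow> f 0 = 0"
  unfolding local_frame_def by auto

lemma local_frame_bij:
  assumes "local_frame f"
  shows "bij f"
proof -
  obtain u where u: "cmod u = 1" and f: "f = (\<lambda>z. u * z) \<or> f = (\<lambda>z. u * cnj z)"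
    using assms unfolding local_frame_def by blast
  then have "u \<noteq> 0" by auto
  from f show ?thesis
  proof
    assume "f = (\<lambda>z. u * z)"
    then show ?thesis
      using \<open>u \<noteq> 0\<close> by (auto simp: bij_def inj_def surj_def intro!: exI[where x = "_ / u"])
  next
    assume "f = (\<lambda>z. u * cnj z)"
    then show ?thesis
      using \<open>u \<noteq> 0\<close> by (auto simp: bij_def inj_def surj_def intro!: exI[where x = "cnj (_ / u)"])
  qed
qed

lemma local_frame_inv_eq_0_iff:
  assumes "local_frame f"
  shows "inv f w = 0 \<longleftrightarrow> w = 0"
  using bij_inv_eq_iff[OF local_frame_bij[OF assms], of 0 w] local_frame_zero[OF assms]
  by auto

lemma snapshot_LimitedVis:
  assumes "local_frame f"
  shows "snapshot LimitedVis Vr f c p = {z \<in> snapshot FullVis Vr f c p. cmod z \<le> Vr}"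
  unfolding snapshot_def sees_def using local_frame_norm[OF assms]
  by (auto simp: dist_norm norm_minus_commute)

lemma card_snapshot_FullVis:
  assumes "local_frame f"
  shows "card (snapshot FullVis Vr f c p) = card (set c)"
proof -
  have "inj (\<lambda>q. f (q - p))"
    using bij_is_inj[OF local_frame_bij[OF assms]] unfolding inj_def by (metis diff_add_cancel)
  then show ?thesis
    unfolding snapshot_def sees_def by (simp add: card_image inj_on_def inj_def)
qed

lemma nth_fsync_step:
  "i < length c \<Longrightarrow>
    fsync_step vis Vr A fr c ! i = c ! i + inv (fr i) (A (snapshot vis Vr (fr i) c (c ! i)))"
  by (simp add: fsync_step_def)

lemma length_fsync_step [simp]: "length (fsync_step vis Vr A fr c) = length c"
  by (simp add: fsync_step_def)

lemma length_fsync_exec [simp]: "length (fsync_exec vis Vr A fr c0 t) = length c0"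
  by (induction t) simp_all

definition truncate_view :: "real \<Rightarrow> algorithm \<Rightarrow> algorithm" where
  "truncate_view Vr A = (\<lambda>S. A {z \<in> S. cmod z \<le> Vr})"

lemma fsync_step_truncate_view:
  assumes "\<forall>i<length c. local_frame (fr i)"
  shows "fsync_step FullVis Vr (truncate_view Vr A) fr c = fsync_step LimitedVis Vr A fr c"
  using assms by (auto simp: fsync_step_def truncate_view_def snapshot_LimitedVis)

lemma fsync_exec_truncate_view:
  assumes "\<forall>i<length c0. local_frame (fr i)"
  shows "fsync_exec FullVis Vr (truncate_view Vr A) fr c0 = fsync_exec LimitedVis Vr A fr c0"
proof
  fix t show "fsync_exec FullVis Vr (truncate_view Vr A) fr c0 t = fsync_exec LimitedVis Vr A fr c0 t"
    by (induction t) (simp_all add: assms fsync_step_truncate_view)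
qed

lemma Task_OBLOT_F_LimitedVis_subset: "Task_OBLOT_F LimitedVis R \<subseteq> Task_OBLOT_F FullVis R"
proof
  fix P assume P: "P \<in> Task_OBLOT_F LimitedVis R"
  obtain n Vr where R: "R = (n, Vr)" by fastforce
  from P obtain A where "\<forall>c0 fr. length c0 = n \<and> vis_connected Vr c0 \<and>
      (\<forall>i<n. local_frame (fr i)) \<longrightarrow> P (fsync_exec LimitedVis Vr A fr c0)"
    by (auto simp: Task_OBLOT_F_def R)
  then have "\<forall>c0 fr. length c0 = n \<and> vis_connected Vr c0 \<and>
      (\<forall>i<n. local_frame (fr i)) \<longrightarrow> P (fsync_exec FullVis Vr (truncate_view Vr A) fr c0)"
    by (simp add: fsync_exec_truncate_view)
  then show "P \<in> Task_OBLOT_F FullVis R"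
    by (auto simp: Task_OBLOT_F_def R)
qed

lemma vis_connected_hub:
  assumes "k < length c" and "\<forall>i<length c. dist (c ! i) (c ! k) \<le> Vr"
  shows "vis_connected Vr c"
  unfolding vis_connected_def
proof (intro allI impI)
  let ?E = "{(a, b). a < length c \<and> b < length c \<and> dist (c ! a) (c ! b) \<le> Vr}"
  fix i j assume "i < length c" "j < length c"
  with assms have "(i, k) \<in> ?E" "(k, j) \<in> ?E"
    by (auto simp: dist_commute)
  then show "(i, j) \<in> ?E\<^sup>*" by (meson r_into_rtrancl rtrancl_trans)
qed

definition first_stays_iff_three_points :: problem where
  "first_stays_iff_three_points e \<longleftrightarrow> (e 1 ! 0 = e 0 ! 0 \<longleftrightarrow> card (set (e 0)) = 3)"

lemma first_stays_iff_three_points_FullVis: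
  "first_stays_iff_three_points \<in> Task_OBLOT_F FullVis (3, Vr)"
proof -
  define A :: algorithm where "A = (\<lambda>S. if card S = 3 then 0 else 1)"
  have "first_stays_iff_three_points (fsync_exec FullVis Vr A fr c0)"
    if "length c0 = 3" and "\<forall>i<3. local_frame (fr i)" for c0 fr
  proof -
    from that have "local_frame (fr 0)" by simp
    with that show ?thesis
      by (simp add: first_stays_iff_three_points_def nth_fsync_step A_def
          card_snapshot_FullVis local_frame_inv_eq_0_iff)
  qed
  then show ?thesis unfolding Task_OBLOT_F_def by auto
qed

lemma first_stays_iff_three_points_not_LimitedVis:
  "first_stays_iff_three_points \<notin> Task_OBLOT_F LimitedVis (3, 1)"
proof
  assume "first_stays_iff_three_points \<in> Task_OBLOT_F LimitedVis (3, 1)"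
  then obtain A where A: "\<And>c0 fr. length c0 = 3 \<Longrightarrow> vis_connected 1 c0 \<Longrightarrow>
      \<forall>i<3. local_frame (fr i) \<Longrightarrow>
      first_stays_iff_three_points (fsync_exec LimitedVis 1 A fr c0)"
    unfolding Task_OBLOT_F_def by auto
  define fr :: "nat \<Rightarrow> complex \<Rightarrow> complex" where "fr = (\<lambda>i z. z)"
  define line :: config where "line = [0, 1, 2]"
  define pair :: config where "pair = [0, 1, 1]"
  have frames: "\<forall>i<3. local_frame (fr i)"
    by (simp add: fr_def local_frame_id)
  have "vis_connected 1 line"
    by (rule vis_connected_hub[of 1]) (auto simp: line_def dist_norm less_Suc_eq numeral_3_eq_3)
  then have "first_stays_iff_three_points (fsync_exec LimitedVis 1 A fr line)"
    using A frames by (simp add: line_def)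
  moreover have "vis_connected 1 pair"
    by (rule vis_connected_hub[of 1]) (auto simp: pair_def dist_norm less_Suc_eq numeral_3_eq_3)
  then have "first_stays_iff_three_points (fsync_exec LimitedVis 1 A fr pair)"
    using A frames by (simp add: pair_def)
  moreover have "snapshot LimitedVis 1 (fr 0) line 0 = {0, 1}"
    and "snapshot LimitedVis 1 (fr 0) pair 0 = {0, 1}"
    by (auto simp: snapshot_def sees_def fr_def line_def pair_def dist_norm)
  ultimately show False
    by (simp add: first_stays_iff_three_points_def nth_fsync_step fr_def line_def pair_def)
qed

theorem theorem1:
  shows "model_gt (Task_OBLOT_F FullVis) (Task_OBLOT_F LimitedVis)"
proof -
  have "model_ge (Task_OBLOT_F FullVis) (Task_OBLOT_F LimitedVis)"
    by (simp add: model_ge_def Task_OBLOT_F_LimitedVis_subset)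
  moreover have "(3, 1) \<in> teams" by (simp add: teams_def)
  moreover have "first_stays_iff_three_points
      \<in> Task_OBLOT_F FullVis (3, 1) - Task_OBLOT_F LimitedVis (3, 1)"
    using first_stays_iff_three_points_FullVis first_stays_iff_three_points_not_LimitedVis
    by blast
  ultimately show ?thesis
    unfolding model_gt_def by blast
qed

end
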